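(* Let $s$ be a positive integer, $\alpha_1,\dotsc,\alpha_d\in\mathbb{C}$, $z_1,\dotsc,z_d\in\mathbb{C}$, and $Q(z)=\sum_{j=1}^d\alpha_j(z-z_j)^{-s}$. Then for every $n\ge0$, $y=Q^{(n)}$ satisfies $$\sum_{i=0}^d\frac{e_i(z)}{(s+n)(s+n+1)\cdots(s+n+i-1)}\frac{\mathrm{d}^iy}{\mathrm{d}z^i}=0,$$ where $e_i(z)$ is the $i$-th elementary symmetric function of the $d$ quantities $z-z_1,\dotsc,z-z_d$, and $e_0=1$ (the empty product in the denominator for $i=0$ is $1$). *)

theory Defs
  imports "HOL-Analysis.Analysis"
begin

definition elem_sym :: "(nat \<Rightarrow> complex) \<Rightarrow> nat \<Rightarrow> nat \<Rightarrow> complex \<Rightarrow> complex" where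
  "elem_sym zs d i z = (\<Sum>S\<in>{S. S \<subseteq> {1..d} \<and> card S = i}. \<Prod>j\<in>S. z - zs j)"

end

theory Submission
  imports Defs
begin

text \<open>The i-th derivative of \<open>P(z) = \<Sum>\<^sub>j \<beta>\<^sub>j / (z - z\<^sub>j)^m\<close> is
  \<open>(m)\<^sub>i \<Sum>\<^sub>j \<beta>\<^sub>j t\<^sub>j^i / (z - z\<^sub>j)^m\<close> with \<open>t\<^sub>j = -1/(z - z\<^sub>j)\<close>. Dividing by the
  Pochhammer symbol and summing against \<open>e\<^sub>i(z)\<close> turns the operator applied to P into
  \<open>\<Sum>\<^sub>j \<beta>\<^sub>j / (z - z\<^sub>j)^m \<Prod>\<^sub>k (1 + t\<^sub>j (z - z\<^sub>k))\<close>, and the factor k = j of every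
  product vanishes. The n-th derivative of Q has this shape with m = s + n.\<close>

lemma elem_sym_generating_polynomial:
  fixes t z :: complex
  shows "(\<Sum>i=0..d. elem_sym zs d i z * t ^ i) = (\<Prod>k\<in>{1..d}. 1 + t * (z - zs k))"
proof -
  have "(\<Prod>k\<in>{1..d}. t * (z - zs k) + 1) = (\<Sum>X\<in>Pow {1..d}. \<Prod>k\<in>X. t * (z - zs k))"
    by (subst prod_add) auto
  also have "\<dots> = (\<Sum>X\<in>Pow {1..d}. t ^ card X * (\<Prod>k\<in>X. z - zs k))"
    by (rule sum.cong) (auto simp: prod.distrib)
  also have "\<dots> = (\<Sum>i\<in>{0..d}. \<Sum>X\<in>{X. X \<in> Pow {1..d} \<and> card X = i}. t ^ card X * (\<Prod>k\<in>X. z - zs k))"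
  proof (rule sum.group[symmetric])
    show "card ` Pow {1..d} \<subseteq> {0..d}"
      using card_mono[of "{1..d}"] by fastforce
  qed auto
  also have "\<dots> = (\<Sum>i=0..d. elem_sym zs d i z * t ^ i)"
    unfolding elem_sym_def sum_distrib_right
    by (intro sum.cong refl) (auto simp: mult.commute)
  finally show ?thesis
    by (simp add: add.commute)
qed

lemma has_field_derivative_inverse_power:
  fixes a c w :: complex
  assumes "w \<noteq> a"
  shows "((\<lambda>x. c / (x - a) ^ m) has_field_derivative - c * of_nat m / (w - a) ^ (m + 1)) (at w)"
proof (cases m)
  case 0
  then show ?thesis by (auto intro!: derivative_eq_intros)
next
  case (Suc k)
  have "((\<lambda>x. c / (x - a) ^ m) has_field_derivative
      - (c * (of_nat m * (w - a) ^ (m - 1) * 1)) / ((w - a) ^ m * (w - a) ^ m)) (at w)"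
    using assms by (auto intro!: derivative_eq_intros)
  also have "(w - a) ^ m * (w - a) ^ m = (w - a) ^ (m - 1) * (w - a) ^ (m + 1)"
    by (simp add: Suc power_add[symmetric])
  also have "- (c * (of_nat m * (w - a) ^ (m - 1) * 1)) / ((w - a) ^ (m - 1) * (w - a) ^ (m + 1))
      = - c * of_nat m / (w - a) ^ (m + 1)"
    using assms by simp
  finally show ?thesis .
qed

lemma higher_deriv_inverse_power_sum:
  fixes \<beta> zs :: "'j \<Rightarrow> complex" and P :: "complex \<Rightarrow> complex"
  assumes "finite A"
    and P: "\<And>w. w \<notin> zs ` A \<Longrightarrow> P w = (\<Sum>j\<in>A. \<beta> j / (w - zs j) ^ m)"
    and "z \<notin> zs ` A"
  shows "(deriv ^^ k) P z = (\<Sum>j\<in>A. \<beta> j * (-1) ^ k * pochhammer (of_nat m) k / (z - zs j) ^ (m + k))"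
  using \<open>z \<notin> zs ` A\<close>
proof (induction k arbitrary: z)
  case 0
  then show ?case by (simp add: P)
next
  case (Suc k)
  define c where "c j = \<beta> j * (-1) ^ k * pochhammer (of_nat m) k" for j
  have "open (- zs ` A)"
    using \<open>finite A\<close> by (intro open_Compl finite_imp_closed) auto
  then have "eventually (\<lambda>w. w \<notin> zs ` A) (nhds z)"
    using eventually_nhds_in_open Suc.prems by force
  then have "eventually (\<lambda>w. (deriv ^^ k) P w = (\<Sum>j\<in>A. c j / (w - zs j) ^ (m + k))) (nhds z)"
    by eventually_elim (simp add: Suc.IH c_def)
  then have "(deriv ^^ Suc k) P z = deriv (\<lambda>w. \<Sum>j\<in>A. c j / (w - zs j) ^ (m + k)) z"
    using deriv_cong_ev by force
  also have "\<dots> = (\<Sum>j\<in>A. - c j * of_nat (m + k) / (z - zs j) ^ (m + k + 1))"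
    using Suc.prems
    by (intro DERIV_imp_deriv DERIV_sum has_field_derivative_inverse_power) auto
  also have "\<dots> = (\<Sum>j\<in>A. \<beta> j * (-1) ^ Suc k * pochhammer (of_nat m) (Suc k) / (z - zs j) ^ (m + Suc k))"
    by (intro sum.cong refl) (simp add: c_def pochhammer_Suc algebra_simps)
  finally show ?case .
qed

lemma elem_sym_operator_annihilates_inverse_power_sum:
  fixes \<beta> zs :: "nat \<Rightarrow> complex" and P :: "complex \<Rightarrow> complex"
  assumes "m > 0"
    and P: "\<And>w. w \<notin> zs ` {1..d} \<Longrightarrow> P w = (\<Sum>j=1..d. \<beta> j / (w - zs j) ^ m)"
    and z: "z \<notin> zs ` {1..d}"
  shows "(\<Sum>i=0..d. elem_sym zs d i z / pochhammer (of_nat m) i * (deriv ^^ i) P z) = 0"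
proof -
  define t where "t j = - 1 / (z - zs j)" for j
  define C where "C j = \<beta> j / (z - zs j) ^ m" for j
  have z_ne: "z - zs j \<noteq> 0" if "j \<in> {1..d}" for j
    using z that by auto
  have pochhammer_ne: "pochhammer (of_nat m :: complex) i \<noteq> 0" for i
    using \<open>m > 0\<close> pochhammer_pos[of m i] by (simp add: pochhammer_of_nat)
  have deriv_P: "(deriv ^^ i) P z = pochhammer (of_nat m) i * (\<Sum>j=1..d. C j * t j ^ i)" for i
  proof -
    have "(deriv ^^ i) P z
        = (\<Sum>j=1..d. \<beta> j * (-1) ^ i * pochhammer (of_nat m) i / (z - zs j) ^ (m + i))"
      using P z by (rule higher_deriv_inverse_power_sum[OF finite_atLeastAtMost])
    also have "\<dots> = pochhammer (of_nat m) i * (\<Sum>j=1..d. C j * t j ^ i)"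
      unfolding sum_distrib_left t_def power_divide using z_ne
      by (intro sum.cong refl) (simp add: C_def power_add field_simps)
    finally show ?thesis .
  qed
  have "(\<Sum>i=0..d. elem_sym zs d i z / pochhammer (of_nat m) i * (deriv ^^ i) P z)
      = (\<Sum>i=0..d. \<Sum>j=1..d. C j * (elem_sym zs d i z * t j ^ i))"
    by (intro sum.cong refl) (simp add: deriv_P pochhammer_ne sum_distrib_left ac_simps)
  also have "\<dots> = (\<Sum>j=1..d. C j * (\<Prod>k\<in>{1..d}. 1 + t j * (z - zs k)))"
    unfolding elem_sym_generating_polynomial[symmetric] sum_distrib_left by (rule sum.swap)
  also have "\<dots> = 0"
  proof (intro sum.neutral ballI)
    fix j assume j: "j \<in> {1..d}"
    have "1 + t j * (z - zs j) = 0"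
      using z_ne[OF j] by (simp add: t_def)
    with j show "C j * (\<Prod>k\<in>{1..d}. 1 + t j * (z - zs k)) = 0"
      by (metis finite_atLeastAtMost mult_zero_right prod_zero_iff)
  qed
  finally show ?thesis .
qed

theorem proposition5p2:
  fixes s d n :: nat and \<alpha> zs :: "nat \<Rightarrow> complex" and Q :: "complex \<Rightarrow> complex"
  assumes "s > 0"
    and "\<And>z. Q z = (\<Sum>j=1..d. \<alpha> j / (z - zs j) ^ s)"
  shows "\<forall>z. z \<notin> zs ` {1..d} \<longrightarrow>
    (\<Sum>i=0..d. elem_sym zs d i z / pochhammer (of_nat (s + n)) i
        * (deriv ^^ i) ((deriv ^^ n) Q) z) = 0"
proof (intro allI impI)
  fix z assume z: "z \<notin> zs ` {1..d}"
  have "(deriv ^^ n) Q w = (\<Sum>j=1..d. (\<alpha> j * (-1) ^ n * pochhammer (of_nat s) n) / (w - zs j) ^ (s + n))"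
    if "w \<notin> zs ` {1..d}" for w
    using higher_deriv_inverse_power_sum[OF finite_atLeastAtMost assms(2) that] by simp
  then show "(\<Sum>i=0..d. elem_sym zs d i z / pochhammer (of_nat (s + n)) i
      * (deriv ^^ i) ((deriv ^^ n) Q) z) = 0"
    using \<open>s > 0\<close> z by (intro elem_sym_operator_annihilates_inverse_power_sum) auto
qed

end
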